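(* Let $Q$ be a sequence, $G=(V,E,\delta)$ a pangenome graph, $k_1,k_2>0$ integers, and $H_{gap}$ the directed graph defined in the context. If $v_{(i_0,u_0,f_0)},\dots,v_{(i_k,u_k,f_k)}$ is a directed path in $H_{gap}$, then $Q_{i_0}Q_{i_1}\cdots Q_{i_k}$ is a $(k_1,k_2)$-gap common subsequence between $Q$ and $G$.
   Context: Strings are 0-indexed; $S_i$ is the character of $S$ at position $i$. A pangenome graph is a triple $G=(V,E,\delta)$ where $(V,E)$ is a finite directed graph and $\delta:V\to\Sigma^*\setminus\{\epsilon\}$ assigns to each vertex a nonempty string over an alphabet $\Sigma$. A path in $G$ is a sequence of vertices $P=w_0,\dots,w_k$ ($k\ge0$) with $(w_j,w_{j+1})\in E$ for $j<k$; $spell(P)=\delta(w_0)\cdots\delta(w_k)$. A sequence $S$ is a $(k_1,k_2)$-gap common subsequence between $Q$ and $G$ if there is a path $P$ in $G$ and indices $p_0<\dots<p_{|S|-1}$ in $Q$ and $q_0<\dots<q_{|S|-1}$ in $spell(P)$ with $Q_{p_j}=spell(P)_{q_j}=S_j$ for all $j$, $p_j-p_{j-1}\le k_1$ and $q_j-q_{j-1}\le k_2$ for all $1\le j\le|S|-1$. The directed graph $H_{gap}$ has vertex set $\{v_{(i,u,f)}: 0\le i\le|Q|-1,\ u\in V,\ 0\le f\le|\delta(u)|-1,\ Q_i=\delta(u)_f\}$, and an edge from $v_{(i,u,f)}$ to $v_{(i',u',f')}$ if and only if $0<i'-i\le k_1$ and: if $u\ne u'$, there is a path $P=w_0,\dots,w_k$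 from $u=w_0$ to $u'=w_k$ in $G$ with $0<\sum_{j=0}^{k-1}|\delta(w_j)|+f'-f\le k_2$; if $u=u'$, then $0<f'-f\le k_2$. *)

theory Defs
  imports Main
begin

definition pangenome_graph :: "'v set \<Rightarrow> ('v \<times> 'v) set \<Rightarrow> ('v \<Rightarrow> 'a list) \<Rightarrow> bool" where
  "pangenome_graph V E \<delta> \<longleftrightarrow> finite V \<and> E \<subseteq> V \<times> V \<and> (\<forall>u\<in>V. \<delta> u \<noteq> [])"

definition is_path :: "'v set \<Rightarrow> ('v \<times> 'v) set \<Rightarrow> 'v list \<Rightarrow> bool" where
  "is_path V E P \<longleftrightarrow> P \<noteq> [] \<and> set P \<subseteq> V \<and> (\<forall>j. Suc j < length P \<longrightarrow> (P ! j, P ! Suc j) \<in> E)"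

definition spell :: "('v \<Rightarrow> 'a list) \<Rightarrow> 'v list \<Rightarrow> 'a list" where
  "spell \<delta> P = concat (map \<delta> P)"

definition gap_common_subseq ::
  "nat \<Rightarrow> nat \<Rightarrow> 'a list \<Rightarrow> 'v set \<Rightarrow> ('v \<times> 'v) set \<Rightarrow> ('v \<Rightarrow> 'a list) \<Rightarrow> 'a list \<Rightarrow> bool" where
  "gap_common_subseq k1 k2 Q V E \<delta> S \<longleftrightarrow>
     (\<exists>P p q. is_path V E P \<and>
        (\<forall>j < length S. p j < length Q \<and> q j < length (spell \<delta> P)) \<and>
        (\<forall>j. Suc j < length S \<longrightarrow> p j < p (Suc j) \<and> q j < q (Suc j)) \<and>
        (\<forall>j < length S. Q ! p j = S ! j \<and> spell \<delta> P ! q j = S ! j) \<and>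
        (\<forall>j. 1 \<le> j \<and> j < length S \<longrightarrow> p j - p (j - 1) \<le> k1 \<and> q j - q (j - 1) \<le> k2))"

definition Hgap_vertex :: "'a list \<Rightarrow> 'v set \<Rightarrow> ('v \<Rightarrow> 'a list) \<Rightarrow> nat \<times> 'v \<times> nat \<Rightarrow> bool" where
  "Hgap_vertex Q V \<delta> x = (case x of (i, u, f) \<Rightarrow>
     i < length Q \<and> u \<in> V \<and> f < length (\<delta> u) \<and> Q ! i = \<delta> u ! f)"

definition Hgap_edge ::
  "nat \<Rightarrow> nat \<Rightarrow> 'a list \<Rightarrow> 'v set \<Rightarrow> ('v \<times> 'v) set \<Rightarrow> ('v \<Rightarrow> 'a list) \<Rightarrow>
   nat \<times> 'v \<times> nat \<Rightarrow> nat \<times> 'v \<times> nat \<Rightarrow> bool" where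
  "Hgap_edge k1 k2 Q V E \<delta> x y = (case x of (i, u, f) \<Rightarrow> case y of (i', u', f') \<Rightarrow>
     Hgap_vertex Q V \<delta> x \<and> Hgap_vertex Q V \<delta> y \<and>
     0 < int i' - int i \<and> int i' - int i \<le> int k1 \<and>
     (if u \<noteq> u' then
        (\<exists>P. is_path V E P \<and> hd P = u \<and> last P = u' \<and>
           0 < int (sum_list (map (\<lambda>w. length (\<delta> w)) (butlast P))) + int f' - int f \<and>
           int (sum_list (map (\<lambda>w. length (\<delta> w)) (butlast P))) + int f' - int f \<le> int k2)
      else 0 < int f' - int f \<and> int f' - int f \<le> int k2))"

definition Hgap_path ::
  "nat \<Rightarrow> nat \<Rightarrow> 'a list \<Rightarrow> 'v set \<Rightarrow> ('v \<times> 'v) set \<Rightarrow> ('v \<Rightarrow> 'a list) \<Rightarrow>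
   (nat \<times> 'v \<times> nat) list \<Rightarrow> bool" where
  "Hgap_path k1 k2 Q V E \<delta> xs \<longleftrightarrow> xs \<noteq> [] \<and> (\<forall>x\<in>set xs. Hgap_vertex Q V \<delta> x) \<and>
     (\<forall>j. Suc j < length xs \<longrightarrow> Hgap_edge k1 k2 Q V E \<delta> (xs ! j) (xs ! Suc j))"

end

theory Submission
  imports Defs
begin

text \<open>Build the graph path from the back of the H_gap path. An edge from (i, u, f) to
  (i', u', f') provides a walk R from u to the start u' of the graph path P already built for
  the rest (R = [] if u = u'), with 0 < |spell R| + f' - f \<le> k2. On R @ P the old graph
  positions are shifted by |spell R| and f is a position inside \<delta> u, so consecutive graph
  positions stay at distance at most k2. The query positions are the first coordinates, spaced
  by at most k1 by the edge condition.\<close>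

lemma is_path_iff_successively:
  "is_path V E P \<longleftrightarrow> P \<noteq> [] \<and> set P \<subseteq> V \<and> successively (\<lambda>a b. (a, b) \<in> E) P"
  by (simp add: is_path_def successively_conv_nth)

lemma is_path_join:
  assumes "is_path V E P0" and "is_path V E P" and "last P0 = hd P"
  shows "is_path V E (butlast P0 @ P)"
proof -
  have "P0 = butlast P0 @ [hd P]"
    using assms by (metis append_butlast_last_id is_path_def)
  then have "successively (\<lambda>a b. (a, b) \<in> E) (butlast P0 @ [hd P])"
    using assms(1) by (metis is_path_iff_successively)
  then show ?thesis
    using assms by (auto simp: is_path_iff_successively successively_append_iff in_set_butlastD)
qed

lemma spell_append: "spell \<delta> (xs @ ys) = spell \<delta> xs @ spell \<delta> ys"
  by (simp add: spell_def)

lemma length_spell: "length (spell \<delta> P) = sum_list (map (\<lambda>w. length (\<delta> w)) P)"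
  by (simp add: spell_def length_concat comp_def)

definition occurs_at :: "'a list \<Rightarrow> nat \<Rightarrow> 'a \<Rightarrow> bool" where
  "occurs_at s n c \<longleftrightarrow> n < length s \<and> s ! n = c"

lemma occurs_at_append_left: "occurs_at r n c \<Longrightarrow> occurs_at (r @ s) n c"
  by (simp add: occurs_at_def nth_append)

lemma occurs_at_append_right: "occurs_at s n c \<Longrightarrow> occurs_at (r @ s) (length r + n) c"
  by (simp add: occurs_at_def)

lemma occurs_at_spell_hd:
  "P \<noteq> [] \<Longrightarrow> occurs_at (\<delta> (hd P)) n c \<Longrightarrow> occurs_at (spell \<delta> P) n c"
  by (cases P) (simp_all add: spell_def occurs_at_append_left)

definition gap_bounded :: "nat \<Rightarrow> nat list \<Rightarrow> bool" where
  "gap_bounded k ns \<longleftrightarrow> successively (\<lambda>m n. m < n \<and> n - m \<le> k) ns"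

lemma gap_bounded_Cons_Cons:
  "gap_bounded k (m # n # ns) \<longleftrightarrow> m < n \<and> n - m \<le> k \<and> gap_bounded k (n # ns)"
  by (simp add: gap_bounded_def)

lemma gap_bounded_shift: "gap_bounded k (map ((+) d) ns) \<longleftrightarrow> gap_bounded k ns"
  by (simp add: gap_bounded_def successively_map)

lemma gap_common_subseqI:
  assumes "is_path V E P"
    and "list_all2 (occurs_at Q) ps S" and "list_all2 (occurs_at (spell \<delta> P)) qs S"
    and "gap_bounded k1 ps" and "gap_bounded k2 qs"
  shows "gap_common_subseq k1 k2 Q V E \<delta> S"
  unfolding gap_common_subseq_def
proof (intro exI conjI)
  show "is_path V E P" by fact
  have len: "length ps = length S" "length qs = length S"
    using assms(2,3) by (simp_all add: list_all2_lengthD)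
  show "\<forall>j < length S. ps ! j < length Q \<and> qs ! j < length (spell \<delta> P)"
    and "\<forall>j < length S. Q ! (ps ! j) = S ! j \<and> spell \<delta> P ! (qs ! j) = S ! j"
    using assms(2,3) by (auto simp: list_all2_conv_all_nth occurs_at_def)
  have steps: "ps ! j < ps ! Suc j \<and> ps ! Suc j - ps ! j \<le> k1"
    "qs ! j < qs ! Suc j \<and> qs ! Suc j - qs ! j \<le> k2" if "Suc j < length S" for j
    using assms(4,5) that len by (auto simp: gap_bounded_def successively_conv_nth)
  then show "\<forall>j. Suc j < length S \<longrightarrow> ps ! j < ps ! Suc j \<and> qs ! j < qs ! Suc j"
    by blast
  show "\<forall>j. 1 \<le> j \<and> j < length S \<longrightarrow> ps ! j - ps ! (j - 1) \<le> k1 \<and> qs ! j - qs ! (j - 1) \<le> k2"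
  proof (intro allI impI)
    fix j assume "1 \<le> j \<and> j < length S"
    then obtain m where "j = Suc m" "Suc m < length S" by (cases j) auto
    then show "ps ! j - ps ! (j - 1) \<le> k1 \<and> qs ! j - qs ! (j - 1) \<le> k2"
      using steps by simp
  qed
qed

lemma Hgap_path_iff_successively:
  "Hgap_path k1 k2 Q V E \<delta> xs \<longleftrightarrow>
     xs \<noteq> [] \<and> (\<forall>x\<in>set xs. Hgap_vertex Q V \<delta> x) \<and> successively (Hgap_edge k1 k2 Q V E \<delta>) xs"
  by (simp add: Hgap_path_def successively_conv_nth)

lemma Hgap_path_Cons_Cons:
  "Hgap_path k1 k2 Q V E \<delta> (x # y # xs) \<longleftrightarrow>
     Hgap_vertex Q V \<delta> x \<and> Hgap_edge k1 k2 Q V E \<delta> x y \<and> Hgap_path k1 k2 Q V E \<delta> (y # xs)"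
  by (auto simp: Hgap_path_iff_successively)

lemma Hgap_edge_query_gap:
  "Hgap_edge k1 k2 Q V E \<delta> (i, u, f) (i', u', f') \<Longrightarrow> i < i' \<and> i' - i \<le> k1"
  by (auto simp: Hgap_edge_def)

lemma Hgap_edge_extend_path:
  assumes edge: "Hgap_edge k1 k2 Q V E \<delta> (i, u, f) (i', u', f')"
    and P: "is_path V E P" "hd P = u'"
  obtains R where "is_path V E (R @ P)" "hd (R @ P) = u"
    and "f < length (spell \<delta> R) + f'" "length (spell \<delta> R) + f' - f \<le> k2"
proof (cases "u = u'")
  case True
  with edge have "f < f'" "f' - f \<le> k2"
    by (auto simp: Hgap_edge_def)
  with P True show ?thesis
    using that[of "[]"] by (simp add: spell_def)
next
  case False
  with edge obtain P0 where P0: "is_path V E P0" "hd P0 = u" "last P0 = u'"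
    and gap: "0 < int (length (spell \<delta> (butlast P0))) + int f' - int f"
      "int (length (spell \<delta> (butlast P0))) + int f' - int f \<le> int k2"
    by (auto simp: Hgap_edge_def length_spell)
  have "P0 \<noteq> []"
    using P0(1) by (simp add: is_path_def)
  then have P0_eq: "P0 = butlast P0 @ [u']"
    using P0(3) by (metis append_butlast_last_id)
  have "butlast P0 \<noteq> []"
  proof
    assume "butlast P0 = []"
    then show False
      using P0_eq P0(2) False by (metis list.sel(1) self_append_conv2)
  qed
  then have "hd (butlast P0 @ P) = u"
    using P0_eq P0(2) by (metis hd_append2)
  moreover have "is_path V E (butlast P0 @ P)"
    using P0 P by (intro is_path_join) simp_all
  moreover have "f < length (spell \<delta> (butlast P0)) + f'"
    and "length (spell \<delta> (butlast P0)) + f' - f \<le> k2"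
    using gap by linarith+
  ultimately show ?thesis
    using that by blast
qed

lemma Hgap_path_graph_positions:
  assumes "Hgap_path k1 k2 Q V E \<delta> ((i, u, f) # xs)"
  shows "\<exists>P qs. is_path V E P \<and> hd P = u \<and> gap_bounded k2 (f # qs) \<and>
    list_all2 (\<lambda>q x. occurs_at (spell \<delta> P) q (Q ! fst x)) (f # qs) ((i, u, f) # xs)"
  using assms
proof (induction xs arbitrary: i u f)
  case Nil
  then have "is_path V E [u]" "occurs_at (spell \<delta> [u]) f (Q ! i)"
    by (auto simp: Hgap_path_def Hgap_vertex_def is_path_def spell_def occurs_at_def)
  then show ?case
    by (intro exI[of _ "[u]"] exI[of _ "[]"]) (simp add: gap_bounded_def)
next
  case (Cons y xs)
  obtain i' u' f' where y: "y = (i', u', f')"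
    by (cases y)
  from Cons.prems have vertex: "Hgap_vertex Q V \<delta> (i, u, f)"
    and edge: "Hgap_edge k1 k2 Q V E \<delta> (i, u, f) (i', u', f')"
    and tail: "Hgap_path k1 k2 Q V E \<delta> ((i', u', f') # xs)"
    by (simp_all add: Hgap_path_Cons_Cons y)
  obtain P qs where P: "is_path V E P" "hd P = u'" and qs: "gap_bounded k2 (f' # qs)"
    and occ: "list_all2 (\<lambda>q x. occurs_at (spell \<delta> P) q (Q ! fst x)) (f' # qs) (y # xs)"
    using Cons.IH[OF tail] y by blast
  obtain R where R: "is_path V E (R @ P)" "hd (R @ P) = u"
    and gap: "f < length (spell \<delta> R) + f'" "length (spell \<delta> R) + f' - f \<le> k2"
    using Hgap_edge_extend_path[OF edge P] .
  define d where "d = length (spell \<delta> R)"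
  have "gap_bounded k2 (map ((+) d) (f' # qs))"
    using qs by (simp only: gap_bounded_shift)
  with gap have "gap_bounded k2 (f # map ((+) d) (f' # qs))"
    by (simp add: gap_bounded_Cons_Cons d_def)
  moreover have "occurs_at (spell \<delta> (R @ P)) f (Q ! i)"
    using vertex R by (intro occurs_at_spell_hd) (auto simp: Hgap_vertex_def occurs_at_def is_path_def)
  moreover have "list_all2 (\<lambda>q x. occurs_at (spell \<delta> (R @ P)) q (Q ! fst x))
      (map ((+) d) (f' # qs)) (y # xs)"
    using occ unfolding list_all2_map1 spell_append d_def
    by (rule list_all2_mono) (rule occurs_at_append_right)
  ultimately show ?case
    using R(1) R(2) by (intro exI[of _ "R @ P"] exI[of _ "map ((+) d) (f' # qs)"]) simp
qed

lemma Hgap_path_query_positions: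
  assumes "Hgap_path k1 k2 Q V E \<delta> xs"
  shows "gap_bounded k1 (map fst xs)"
    and "list_all2 (occurs_at Q) (map fst xs) (map (\<lambda>(i, u, f). Q ! i) xs)"
proof -
  have "successively (Hgap_edge k1 k2 Q V E \<delta>) xs"
    using assms by (simp add: Hgap_path_iff_successively)
  then show "gap_bounded k1 (map fst xs)"
    unfolding gap_bounded_def successively_map
    by (rule successively_mono) (auto dest: Hgap_edge_query_gap)
  have "occurs_at Q (fst (xs ! j)) (Q ! fst (xs ! j))" if "j < length xs" for j
  proof -
    have "Hgap_vertex Q V \<delta> (xs ! j)"
      using assms that by (simp add: Hgap_path_def)
    then show ?thesis
      by (cases "xs ! j") (simp add: Hgap_vertex_def occurs_at_def)
  qed
  then show "list_all2 (occurs_at Q) (map fst xs) (map (\<lambda>(i, u, f). Q ! i) xs)"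
    by (simp add: list_all2_conv_all_nth case_prod_beta)
qed

theorem lemma6:
  fixes Q :: "'a list" and V :: "'v set" and E :: "('v \<times> 'v) set" and \<delta> :: "'v \<Rightarrow> 'a list"
    and k1 k2 :: nat and xs :: "(nat \<times> 'v \<times> nat) list"
  assumes "pangenome_graph V E \<delta>"
    and "k1 > 0" and "k2 > 0"
    and "Hgap_path k1 k2 Q V E \<delta> xs"
  shows "gap_common_subseq k1 k2 Q V E \<delta> (map (\<lambda>(i, u, f). Q ! i) xs)"
proof -
  obtain i u f xs' where xs: "xs = (i, u, f) # xs'"
    using assms(4) by (cases xs) (auto simp: Hgap_path_def)
  obtain P qs where "is_path V E P" "gap_bounded k2 (f # qs)"
    and "list_all2 (\<lambda>q x. occurs_at (spell \<delta> P) q (Q ! fst x)) (f # qs) xs"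
    using Hgap_path_graph_positions[of k1 k2 Q V E \<delta> i u f xs'] assms(4) unfolding xs by blast
  moreover have "list_all2 (occurs_at (spell \<delta> P)) (f # qs) (map (\<lambda>(i, u, f). Q ! i) xs)"
    using calculation(3) unfolding list_all2_map2
    by (rule list_all2_mono) (simp add: case_prod_beta)
  ultimately show ?thesis
    using Hgap_path_query_positions[OF assms(4)] by (intro gap_common_subseqI)
qed

end
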